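(* Let $d\ge 2$ and let $n_k$ denote the number of vertices of the $k$-iterated line digraph $L^k(CK(d,4))$ of the cyclic Kautz digraph $CK(d,4)$; equivalently, $n_k$ is the number of words $a_1a_2\cdots a_{k+4}$ over the alphabet $\{0,1,\dots,d\}$ such that every block of four consecutive letters $a_ia_{i+1}a_{i+2}a_{i+3}$ satisfies $a_i\ne a_{i+1}$, $a_{i+1}\ne a_{i+2}$, $a_{i+2}\ne a_{i+3}$ and $a_i\ne a_{i+3}$. Then $n_0=d^4+d$, $n_1=d^5-d^4+d^3+2d^2-d$, and $$n_k=(d-1)\,n_{k-1}+n_{k-2}\qquad\text{for all } k\ge 2.$$ In particular, for $d=2$ the sequence is $18,30,48,78,126,\dots$ (satisfying the Fibonacci recurrence).
   Context: The cyclic Kautz digraph $CK(d,4)$ has as vertices all words $a_1a_2a_3a_4$ over $\{0,1,\dots,d\}$ with $a_i\ne a_{i+1}$ for $i=1,2,3$ and $a_1\ne a_4$, and an arc from $a_1a_2a_3a_4$ to $a_2a_3a_4a_5$ whenever $a_5\ne a_4$ and $a_5\ne a_2$. The line digraph $LG$ has as vertex set the set of arcs of $G$, with an arc from $e$ to $f$ whenever the head of $e$ equals the tail of $f$; $L^0G=G$, $L^kG=L(L^{k-1}G)$. *)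

theory Defs
  imports Main
begin

text \<open>Vertices of iterated line digraphs: a vertex of the base digraph is Base x;
an arc (u,v) of a digraph, which is a vertex of its line digraph, is Arc u v.\<close>

datatype 'a vtx = Base 'a | Arc "'a vtx" "'a vtx"

type_synonym 'a digraph = "'a vtx set \<times> ('a vtx \<times> 'a vtx) set"

definition line_digraph :: "'a digraph \<Rightarrow> 'a digraph" where
  "line_digraph G =
     ((\<lambda>(u, v). Arc u v) ` snd G,
      {(Arc u v, Arc v w) | u v w. (u, v) \<in> snd G \<and> (v, w) \<in> snd G})"

definition iter_line_digraph :: "nat \<Rightarrow> 'a digraph \<Rightarrow> 'a digraph" where
  "iter_line_digraph k G = (line_digraph ^^ k) G"

definition ck_word :: "nat \<Rightarrow> nat list \<Rightarrow> bool" where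
  "ck_word d w \<longleftrightarrow> length w = 4 \<and> (\<forall>a \<in> set w. a \<le> d) \<and>
     w ! 0 \<noteq> w ! 1 \<and> w ! 1 \<noteq> w ! 2 \<and> w ! 2 \<noteq> w ! 3 \<and> w ! 0 \<noteq> w ! 3"

definition cyclic_kautz4 :: "nat \<Rightarrow> nat list digraph" where
  "cyclic_kautz4 d =
     (Base ` {w. ck_word d w},
      {(Base [a1, a2, a3, a4], Base [a2, a3, a4, a5]) | a1 a2 a3 a4 a5.
         ck_word d [a1, a2, a3, a4] \<and> a5 \<le> d \<and> a5 \<noteq> a4 \<and> a5 \<noteq> a2})"

definition ck_words :: "nat \<Rightarrow> nat \<Rightarrow> nat list set" where
  "ck_words d m = {w. length w = m \<and> (\<forall>a \<in> set w. a \<le> d) \<and>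
     (\<forall>i. i + 3 < m \<longrightarrow> w ! i \<noteq> w ! (i+1) \<and> w ! (i+1) \<noteq> w ! (i+2) \<and>
                       w ! (i+2) \<noteq> w ! (i+3) \<and> w ! i \<noteq> w ! (i+3))}"

definition nCK :: "nat \<Rightarrow> nat \<Rightarrow> nat" where
  "nCK d k = card (fst (iter_line_digraph k (cyclic_kautz4 d)))"

end

theory Submission
  imports Defs
begin

text \<open>A vertex of the k-th iterated line digraph of CK(d,4) is a word of length k + 4 in which
letters at distance 1 or 3 differ: the arc from a_1...a_m to a_2...a_(m+1) is the word
a_1...a_(m+1). A new letter appended to a word ending in xyz only has to avoid z and x, so a word of
length m \<ge> 3 has d extensions if x = z and d - 1 otherwise; moreover, the words of length m + 1
ending in a pattern aba are in bijection with their prefixes of length m. Writing n(m) for the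
number of words of length m, this gives n(m + 2) = (d - 1) n(m + 1) + n(m) for m \<ge> 2, and the
initial values follow from n(1) = d + 1, n(2) = d n(1), n(3) = d n(2).\<close>

text \<open>The conditions of ck_words in pairwise form, which stays meaningful for words shorter than four
letters.\<close>
definition kautz_words :: "nat \<Rightarrow> nat \<Rightarrow> nat list set" where
  "kautz_words d m = {w. length w = m \<and> (\<forall>a \<in> set w. a \<le> d) \<and>
     (\<forall>i. Suc i < m \<longrightarrow> w ! i \<noteq> w ! Suc i) \<and> (\<forall>i. i + 3 < m \<longrightarrow> w ! i \<noteq> w ! (i + 3))}"

definition appendable :: "nat list \<Rightarrow> nat \<Rightarrow> bool" where
  "appendable w e \<longleftrightarrow> (w \<noteq> [] \<longrightarrow> e \<noteq> last w) \<and> (3 \<le> length w \<longrightarrow> e \<noteq> w ! (length w - 3))"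

lemma length_kautz_words: "w \<in> kautz_words d m \<Longrightarrow> length w = m"
  by (simp add: kautz_words_def)

lemma finite_kautz_words: "finite (kautz_words d m)"
proof (rule finite_subset)
  show "kautz_words d m \<subseteq> {w. set w \<subseteq> {..d} \<and> length w = m}"
    by (auto simp: kautz_words_def)
qed (rule finite_lists_length_eq, simp)

lemma snoc_in_kautz_words_iff:
  "w @ [e] \<in> kautz_words d (Suc m) \<longleftrightarrow> w \<in> kautz_words d m \<and> e \<le> d \<and> appendable w e"
proof (cases "length w = m")
  case True
  have adj: "(\<forall>i. Suc i < Suc m \<longrightarrow> (w @ [e]) ! i \<noteq> (w @ [e]) ! Suc i) \<longleftrightarrow>
      (\<forall>i. Suc i < m \<longrightarrow> w ! i \<noteq> w ! Suc i) \<and> (w \<noteq> [] \<longrightarrow> e \<noteq> last w)"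
  proof (cases m)
    case (Suc k)
    then show ?thesis using True by (auto simp: nth_append last_conv_nth less_Suc_eq)
  qed (use True in simp)
  have dist3: "(\<forall>i. i + 3 < Suc m \<longrightarrow> (w @ [e]) ! i \<noteq> (w @ [e]) ! (i + 3)) \<longleftrightarrow>
      (\<forall>i. i + 3 < m \<longrightarrow> w ! i \<noteq> w ! (i + 3)) \<and> (3 \<le> length w \<longrightarrow> e \<noteq> w ! (length w - 3))"
  proof (cases "m < 3")
    case False
    then obtain k where "m = k + 3" by (metis add.commute le_Suc_ex not_less)
    then show ?thesis using True by (auto simp: nth_append less_Suc_eq)
  qed (use True in \<open>auto simp: nth_append\<close>)
  show ?thesis
    using adj dist3 True by (auto simp: kautz_words_def appendable_def)
qed (auto simp: kautz_words_def)

lemma kautz_words_Suc_cases: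
  assumes "z \<in> kautz_words d (Suc m)"
  obtains w e where "z = w @ [e]" "w \<in> kautz_words d m" "e \<le> d" "appendable w e"
proof -
  have "z = butlast z @ [last z]"
    using length_kautz_words[OF assms] by (metis append_butlast_last_id list.size(3) nat.distinct(1))
  with assms that show ?thesis by (metis snoc_in_kautz_words_iff)
qed

lemma butlast_in_kautz_words: "z \<in> kautz_words d (Suc m) \<Longrightarrow> butlast z \<in> kautz_words d m"
  by (elim kautz_words_Suc_cases) simp

lemma tl_in_kautz_words:
  assumes "z \<in> kautz_words d (Suc m)"
  shows "tl z \<in> kautz_words d m"
proof -
  have len: "length z = Suc m" and letters: "\<forall>a \<in> set z. a \<le> d"
    and adj: "\<forall>i. Suc i < Suc m \<longrightarrow> z ! i \<noteq> z ! Suc i"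
    and dist3: "\<forall>i. i + 3 < Suc m \<longrightarrow> z ! i \<noteq> z ! (i + 3)"
    using assms unfolding kautz_words_def by blast+
  have set_tl_subset: "set (tl z) \<subseteq> set z"
    by (cases z) auto
  show ?thesis unfolding kautz_words_def
  proof (intro CollectI conjI allI impI)
    fix i assume "Suc i < m"
    then show "tl z ! i \<noteq> tl z ! Suc i" using adj len by (simp add: nth_tl)
  next
    fix i assume "i + 3 < m"
    then show "tl z ! i \<noteq> tl z ! (i + 3)"
      using dist3[rule_format, of "Suc i"] len by (simp add: nth_tl)
  qed (use len letters set_tl_subset in auto)
qed

lemma appendable_tl: "4 \<le> length w \<Longrightarrow> appendable (tl w) e \<longleftrightarrow> appendable w e"
  by (cases w) (auto simp: appendable_def nth_Cons' last_ConsR)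

lemma overlap_in_kautz_words:
  assumes x: "x \<in> kautz_words d (Suc m)" and y: "y \<in> kautz_words d (Suc m)"
    and overlap: "tl x = butlast y" and "3 \<le> m"
  shows "x @ [last y] \<in> kautz_words d (Suc (Suc m))"
proof -
  obtain w e where "y = w @ [e]" "w \<in> kautz_words d m" "e \<le> d" "appendable w e"
    using y by (rule kautz_words_Suc_cases)
  with overlap have "e = last y" "e \<le> d" "appendable (tl x) e"
    by simp_all
  moreover have "appendable (tl x) e \<longleftrightarrow> appendable x e"
    using length_kautz_words[OF x] \<open>3 \<le> m\<close> by (intro appendable_tl) simp
  ultimately show ?thesis
    using x by (simp add: snoc_in_kautz_words_iff)
qed

lemma ck_words_eq_kautz_words:
  assumes "4 \<le> m"
  shows "ck_words d m = kautz_words d m"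
proof (intro set_eqI iffI)
  fix w assume w: "w \<in> ck_words d m"
  have block: "\<And>j. j + 3 < m \<Longrightarrow> w ! j \<noteq> w ! (j + 1) \<and> w ! (j + 1) \<noteq> w ! (j + 2) \<and>
      w ! (j + 2) \<noteq> w ! (j + 3) \<and> w ! j \<noteq> w ! (j + 3)"
    using w by (simp add: ck_words_def)
  have "w ! i \<noteq> w ! Suc i" if "Suc i < m" for i
  proof -
    define j where "j = min i (m - 4)"
    have "j + 3 < m" "i = j \<or> i = j + 1 \<or> i = j + 2"
      using that assms by (auto simp: j_def)
    then show ?thesis using block[of j] by (auto simp: numeral_eq_Suc)
  qed
  then show "w \<in> kautz_words d m"
    using w block by (simp add: ck_words_def kautz_words_def)
next
  fix w assume "w \<in> kautz_words d m"
  then show "w \<in> ck_words d m"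
    by (auto simp: ck_words_def kautz_words_def numeral_eq_Suc)
qed

lemma ck_word_iff: "ck_word d w \<longleftrightarrow> w \<in> kautz_words d 4"
  by (auto simp: ck_word_def ck_words_eq_kautz_words[symmetric] ck_words_def numeral_eq_Suc)

lemma card_kautz_words_Suc_filter:
  "card {z \<in> kautz_words d (Suc m). Q z} =
     (\<Sum>w \<in> kautz_words d m. card {e. e \<le> d \<and> appendable w e \<and> Q (w @ [e])})"
proof -
  let ?S = "SIGMA w : kautz_words d m. {e. e \<le> d \<and> appendable w e \<and> Q (w @ [e])}"
  have "{z \<in> kautz_words d (Suc m). Q z} = (\<lambda>(w, e). w @ [e]) ` ?S"
    by (auto simp: snoc_in_kautz_words_iff elim!: kautz_words_Suc_cases)
  moreover have "inj_on (\<lambda>(w, e). w @ [e]) ?S"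
    by (auto simp: inj_on_def)
  ultimately have "card {z \<in> kautz_words d (Suc m). Q z} = card ?S"
    by (simp add: card_image)
  also have "\<dots> = (\<Sum>w \<in> kautz_words d m. card {e. e \<le> d \<and> appendable w e \<and> Q (w @ [e])})"
    by (rule card_SigmaI[OF finite_kautz_words]) simp
  finally show ?thesis .
qed

lemma card_appendable:
  assumes "w \<in> kautz_words d m" "1 \<le> m"
  shows "card {e. e \<le> d \<and> appendable w e} = (if m < 3 \<or> w ! (m - 3) = last w then d else d - 1)"
proof -
  have len: "length w = m" and letters: "\<forall>a \<in> set w. a \<le> d"
    using assms(1) by (simp_all add: kautz_words_def)
  have w_ne: "w \<noteq> []" using len assms(2) by auto
  have last_le: "last w \<le> d" using letters w_ne by simp
  show ?thesis
  proof (cases "m < 3 \<or> w ! (m - 3) = last w")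
    case True
    then have "{e. e \<le> d \<and> appendable w e} = {..d} - {last w}"
      using len w_ne by (auto simp: appendable_def)
    then show ?thesis using True last_le by simp
  next
    case False
    have "w ! (m - 3) \<le> d" using letters len False by simp
    moreover have "{e. e \<le> d \<and> appendable w e} = {..d} - {last w, w ! (m - 3)}"
      using len w_ne False by (auto simp: appendable_def)
    ultimately show ?thesis using False last_le by (simp add: card_Diff_subset)
  qed
qed

lemma card_kautz_words_Suc:
  assumes "1 \<le> d" "1 \<le> m"
  shows "card (kautz_words d (Suc m)) =
    (d - 1) * card (kautz_words d m) + card {w \<in> kautz_words d m. m < 3 \<or> w ! (m - 3) = last w}"
proof -
  let ?P = "\<lambda>w. m < 3 \<or> w ! (m - 3) = last w"
  have "card (kautz_words d (Suc m)) = (\<Sum>w \<in> kautz_words d m. card {e. e \<le> d \<and> appendable w e})"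
    using card_kautz_words_Suc_filter[of d m "\<lambda>_. True"] by simp
  also have "\<dots> = (\<Sum>w \<in> kautz_words d m. (d - 1) + (if ?P w then 1 else 0))"
    using assms by (intro sum.cong) (simp_all add: card_appendable)
  also have "\<dots> = (d - 1) * card (kautz_words d m) + card {w \<in> kautz_words d m. ?P w}"
    by (simp add: sum.distrib sum.If_cases[OF finite_kautz_words] Collect_conj_eq Int_commute)
  finally show ?thesis .
qed

lemma card_kautz_words_one: "card (kautz_words d 1) = d + 1"
proof -
  have "kautz_words d 1 = (\<lambda>a. [a]) ` {..d}"
    by (auto simp: kautz_words_def length_Suc_conv)
  then show ?thesis by (simp add: card_image inj_on_def)
qed

lemma card_kautz_words_aba:
  assumes "2 \<le> m"
  shows "card {z \<in> kautz_words d (Suc m). z ! (m - 2) = last z} = card (kautz_words d m)"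
proof -
  have "card {z \<in> kautz_words d (Suc m). z ! (m - 2) = last z} =
      (\<Sum>w \<in> kautz_words d m. card {e. e \<le> d \<and> appendable w e \<and> (w @ [e]) ! (m - 2) = last (w @ [e])})"
    by (rule card_kautz_words_Suc_filter)
  also have "\<dots> = (\<Sum>w \<in> kautz_words d m. 1)"
  proof (rule sum.cong)
    fix w assume w: "w \<in> kautz_words d m"
    have len: "length w = m" and letters: "\<forall>a \<in> set w. a \<le> d"
      and adj: "\<forall>i. Suc i < m \<longrightarrow> w ! i \<noteq> w ! Suc i"
      using w by (simp_all add: kautz_words_def)
    have "w \<noteq> []" using len assms by auto
    then have "w ! (m - 2) \<noteq> last w"
      using adj[rule_format, of "m - 2"] assms len
      by (simp add: last_conv_nth Suc_diff_Suc numeral_2_eq_2)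
    moreover have "3 \<le> m \<Longrightarrow> w ! (m - 2) \<noteq> w ! (m - 3)"
      using adj[rule_format, of "m - 3"] by (simp add: Suc_diff_Suc numeral_3_eq_3 numeral_2_eq_2)
    moreover have "w ! (m - 2) \<le> d" using letters len assms by simp
    ultimately have "{e. e \<le> d \<and> appendable w e \<and> (w @ [e]) ! (m - 2) = last (w @ [e])} = {w ! (m - 2)}"
      using len assms by (auto simp: appendable_def nth_append)
    then show "card {e. e \<le> d \<and> appendable w e \<and> (w @ [e]) ! (m - 2) = last (w @ [e])} = 1"
      by simp
  qed simp
  finally show ?thesis by simp
qed

lemma card_kautz_words_Suc_short:
  assumes "1 \<le> d" "1 \<le> m" "m < 3"
  shows "card (kautz_words d (Suc m)) = d * card (kautz_words d m)"
  using card_kautz_words_Suc[OF assms(1,2)] assms by (simp add: algebra_simps)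

lemma card_kautz_words_recurrence:
  assumes "1 \<le> d" "2 \<le> m"
  shows "card (kautz_words d (Suc (Suc m))) = (d - 1) * card (kautz_words d (Suc m)) + card (kautz_words d m)"
  using card_kautz_words_Suc[of d "Suc m"] card_kautz_words_aba[of m d] assms by simp

text \<open>A word of length m + 1 > 4 is the arc from its prefix to its suffix of length m, i.e. a vertex
of the next line digraph.\<close>
function word_vtx :: "nat list \<Rightarrow> nat list vtx" where
  "word_vtx w = (if length w \<le> 4 then Base w else Arc (word_vtx (butlast w)) (word_vtx (tl w)))"
  by auto
termination by (relation "measure length") auto

declare word_vtx.simps [simp del]

lemma word_vtx_short: "length w \<le> 4 \<Longrightarrow> word_vtx w = Base w"
  by (simp add: word_vtx.simps)

lemma word_vtx_long: "4 < length w \<Longrightarrow> word_vtx w = Arc (word_vtx (butlast w)) (word_vtx (tl w))"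
  by (simp add: word_vtx.simps)

lemma butlast_tl_eq_imp_eq:
  assumes "butlast v = butlast w" "tl v = tl w" "2 \<le> length v"
  shows "v = w"
proof -
  have "tl v \<noteq> []" using assms(3) by (cases v) auto
  then have "last v = last w" "v \<noteq> []" "w \<noteq> []"
    using assms(2) by (metis last_tl, auto)
  with assms(1) show ?thesis by (metis append_butlast_last_id)
qed

lemma word_vtx_eq_Base_iff: "word_vtx w = Base v \<longleftrightarrow> length w \<le> 4 \<and> w = v"
  by (cases "length w \<le> 4") (simp_all add: word_vtx_short word_vtx_long)

lemma inj_word_vtx: "inj word_vtx"
proof (rule injI)
  fix v w :: "nat list"
  assume "word_vtx v = word_vtx w"
  then show "v = w"
  proof (induction v arbitrary: w rule: length_induct)
    case (1 v)
    show ?case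
    proof (cases "length v \<le> 4")
      case True
      then show ?thesis
        using "1.prems" by (metis word_vtx_short word_vtx_eq_Base_iff)
    next
      case False
      have w_long: "4 < length w"
      proof (rule ccontr)
        assume "\<not> 4 < length w"
        then have "word_vtx v = Base w" using "1.prems" by (simp add: word_vtx_short)
        with False show False by (simp add: word_vtx_eq_Base_iff)
      qed
      have "Arc (word_vtx (butlast v)) (word_vtx (tl v)) = Arc (word_vtx (butlast w)) (word_vtx (tl w))"
        using "1.prems" word_vtx_long[OF w_long] word_vtx_long[of v] False by simp
      then have "butlast v = butlast w" "tl v = tl w"
        using "1.IH"[rule_format, of "butlast v" "butlast w"] "1.IH"[rule_format, of "tl v" "tl w"] False
        by simp_all
      moreover have "2 \<le> length v" using False by simp
      ultimately show ?thesis by (rule butlast_tl_eq_imp_eq)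
    qed
  qed
qed

definition word_digraph :: "nat \<Rightarrow> nat \<Rightarrow> nat list digraph" where
  "word_digraph d m =
     (word_vtx ` kautz_words d m, (\<lambda>z. (word_vtx (butlast z), word_vtx (tl z))) ` kautz_words d (Suc m))"

lemma cyclic_kautz4_eq_word_digraph: "cyclic_kautz4 d = word_digraph d 4"
proof -
  have vertices: "Base ` {w. ck_word d w} = word_vtx ` kautz_words d 4"
    by (auto simp: ck_word_iff word_vtx_short length_kautz_words intro!: image_cong)
  have "{(Base [a1, a2, a3, a4], Base [a2, a3, a4, a5]) | a1 a2 a3 a4 a5.
          ck_word d [a1, a2, a3, a4] \<and> a5 \<le> d \<and> a5 \<noteq> a4 \<and> a5 \<noteq> a2} =
        (\<lambda>z. (word_vtx (butlast z), word_vtx (tl z))) ` kautz_words d 5"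
  proof (intro set_eqI iffI)
    fix p assume "p \<in> {(Base [a1, a2, a3, a4], Base [a2, a3, a4, a5]) | a1 a2 a3 a4 a5.
          ck_word d [a1, a2, a3, a4] \<and> a5 \<le> d \<and> a5 \<noteq> a4 \<and> a5 \<noteq> a2}"
    then obtain a1 a2 a3 a4 a5 where p: "p = (Base [a1, a2, a3, a4], Base [a2, a3, a4, a5])"
      and "ck_word d [a1, a2, a3, a4]" "a5 \<le> d" "a5 \<noteq> a4" "a5 \<noteq> a2"
      by blast
    then have "[a1, a2, a3, a4, a5] \<in> kautz_words d 5"
      using snoc_in_kautz_words_iff[of "[a1, a2, a3, a4]" a5 d 4] by (simp add: ck_word_iff appendable_def)
    then show "p \<in> (\<lambda>z. (word_vtx (butlast z), word_vtx (tl z))) ` kautz_words d 5"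
      using p by (force simp: word_vtx_short)
  next
    fix p assume "p \<in> (\<lambda>z. (word_vtx (butlast z), word_vtx (tl z))) ` kautz_words d 5"
    then obtain z where z: "z \<in> kautz_words d (Suc 4)" and p: "p = (word_vtx (butlast z), word_vtx (tl z))"
      by auto
    obtain w e where "z = w @ [e]" "w \<in> kautz_words d 4" "e \<le> d" "appendable w e"
      using z by (rule kautz_words_Suc_cases)
    moreover obtain a1 a2 a3 a4 where "w = [a1, a2, a3, a4]"
      using length_kautz_words[OF \<open>w \<in> kautz_words d 4\<close>] by (auto simp: numeral_eq_Suc length_Suc_conv)
    ultimately show "p \<in> {(Base [a1, a2, a3, a4], Base [a2, a3, a4, a5]) | a1 a2 a3 a4 a5.
          ck_word d [a1, a2, a3, a4] \<and> a5 \<le> d \<and> a5 \<noteq> a4 \<and> a5 \<noteq> a2}"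
      using p by (auto simp: word_vtx_short ck_word_iff appendable_def)
  qed
  with vertices show ?thesis by (simp add: cyclic_kautz4_def word_digraph_def)
qed

lemma line_digraph_word_digraph:
  assumes "4 \<le> m"
  shows "line_digraph (word_digraph d m) = word_digraph d (Suc m)"
proof -
  let ?arc = "\<lambda>z. (word_vtx (butlast z), word_vtx (tl z))"
  have split_vtx: "word_vtx z = Arc (word_vtx (butlast z)) (word_vtx (tl z))"
    if "z \<in> kautz_words d (Suc m)" for z
    using that assms by (intro word_vtx_long) (simp add: length_kautz_words)
  have vertices: "(\<lambda>(u, v). Arc u v) ` ?arc ` kautz_words d (Suc m) = word_vtx ` kautz_words d (Suc m)"
    by (auto simp: image_image split_vtx intro!: image_cong)
  have arcs: "{(Arc u v, Arc v w) | u v w. (u, v) \<in> ?arc ` kautz_words d (Suc m) \<and> (v, w) \<in> ?arc ` kautz_words d (Suc m)}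
      = ?arc ` kautz_words d (Suc (Suc m))"
  proof (intro set_eqI iffI)
    fix p assume "p \<in> {(Arc u v, Arc v w) | u v w.
        (u, v) \<in> ?arc ` kautz_words d (Suc m) \<and> (v, w) \<in> ?arc ` kautz_words d (Suc m)}"
    then obtain x y where x: "x \<in> kautz_words d (Suc m)" and y: "y \<in> kautz_words d (Suc m)"
      and middle: "word_vtx (tl x) = word_vtx (butlast y)"
      and p: "p = (Arc (word_vtx (butlast x)) (word_vtx (tl x)), Arc (word_vtx (butlast y)) (word_vtx (tl y)))"
      by auto
    have overlap: "tl x = butlast y"
      using middle inj_word_vtx by (simp add: inj_eq)
    have "x \<noteq> []" "y = butlast y @ [last y]"
      using length_kautz_words[OF x] length_kautz_words[OF y] by (auto intro: append_butlast_last_id[symmetric])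
    then have "butlast (x @ [last y]) = x" "tl (x @ [last y]) = y"
      using overlap by simp_all
    moreover have "x @ [last y] \<in> kautz_words d (Suc (Suc m))"
      using x y overlap assms by (intro overlap_in_kautz_words) simp_all
    ultimately show "p \<in> ?arc ` kautz_words d (Suc (Suc m))"
      using p x y by (force simp: split_vtx)
  next
    fix p assume "p \<in> ?arc ` kautz_words d (Suc (Suc m))"
    then obtain z where z: "z \<in> kautz_words d (Suc (Suc m))" and p: "p = ?arc z"
      by auto
    have bz: "butlast z \<in> kautz_words d (Suc m)" and tz: "tl z \<in> kautz_words d (Suc m)"
      using z by (simp_all add: butlast_in_kautz_words tl_in_kautz_words)
    have "(word_vtx (butlast (butlast z)), word_vtx (tl (butlast z))) \<in> ?arc ` kautz_words d (Suc m)"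
      using bz by blast
    moreover have "(word_vtx (tl (butlast z)), word_vtx (tl (tl z))) \<in> ?arc ` kautz_words d (Suc m)"
      using image_eqI[OF _ tz, of _ ?arc] by (simp add: butlast_tl)
    moreover have "p = (Arc (word_vtx (butlast (butlast z))) (word_vtx (tl (butlast z))),
        Arc (word_vtx (tl (butlast z))) (word_vtx (tl (tl z))))"
      using p bz tz by (simp add: split_vtx butlast_tl)
    ultimately show "p \<in> {(Arc u v, Arc v w) | u v w.
        (u, v) \<in> ?arc ` kautz_words d (Suc m) \<and> (v, w) \<in> ?arc ` kautz_words d (Suc m)}"
      by blast
  qed
  show ?thesis
    using vertices arcs by (simp add: line_digraph_def word_digraph_def)
qed

lemma iter_line_digraph_cyclic_kautz4: "iter_line_digraph k (cyclic_kautz4 d) = word_digraph d (k + 4)"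
  by (induction k) (simp_all add: iter_line_digraph_def cyclic_kautz4_eq_word_digraph line_digraph_word_digraph)

lemma nCK_eq_card_kautz_words: "nCK d k = card (kautz_words d (k + 4))"
  using card_image[OF inj_on_subset[OF inj_word_vtx subset_UNIV]]
  by (simp add: nCK_def iter_line_digraph_cyclic_kautz4 word_digraph_def)

theorem mainTheorem10:
  fixes d :: nat
  assumes "d \<ge> 2"
  shows "(\<forall>k. nCK d k = card (ck_words d (k + 4)))
       \<and> nCK d 0 = d ^ 4 + d
       \<and> int (nCK d 1) = int d ^ 5 - int d ^ 4 + int d ^ 3 + 2 * int d ^ 2 - int d
       \<and> (\<forall>k \<ge> 2. nCK d k = (d - 1) * nCK d (k - 1) + nCK d (k - 2))"
proof -
  have d: "1 \<le> d" using assms by simp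
  let ?n = "\<lambda>m. int (card (kautz_words d m))"
  have rec: "?n (Suc (Suc m)) = (int d - 1) * ?n (Suc m) + ?n m" if "2 \<le> m" for m
    using card_kautz_words_recurrence[OF d that] d by (simp add: of_nat_diff)
  have n2: "?n 2 = int d * (int d + 1)"
    using card_kautz_words_one[of d] card_kautz_words_Suc_short[OF d, of 1]
    by (simp add: numeral_eq_Suc algebra_simps)
  have n3: "?n 3 = int d * int d * (int d + 1)"
    using n2 card_kautz_words_Suc_short[OF d, of 2] by (simp add: numeral_eq_Suc)
  have n4: "?n 4 = int d ^ 4 + int d"
    using rec[of 2] n3 n2 by (simp add: numeral_eq_Suc algebra_simps)
  have n5: "?n 5 = int d ^ 5 - int d ^ 4 + int d ^ 3 + 2 * int d ^ 2 - int d"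
    using rec[of 3] n4 n3 by (simp add: numeral_eq_Suc algebra_simps)
  have "nCK d 0 = d ^ 4 + d"
    using n4 nCK_eq_card_kautz_words[of d 0] by (metis add_0 of_nat_add of_nat_eq_iff of_nat_power)
  moreover have "nCK d k = (d - 1) * nCK d (k - 1) + nCK d (k - 2)" if "2 \<le> k" for k
  proof -
    have "k - 1 + 4 = Suc (k + 2)" "k - 2 + 4 = k + 2" "k + 4 = Suc (Suc (k + 2))"
      using that by simp_all
    then show ?thesis
      using card_kautz_words_recurrence[OF d, of "k + 2"] by (simp only: nCK_eq_card_kautz_words)
  qed
  ultimately show ?thesis
    using n5 by (simp add: nCK_eq_card_kautz_words ck_words_eq_kautz_words)
qed

end
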